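(* Let $G$ be a digraph that is not strongly connected, and suppose $G$ has a strongly connected subdigraph $G'$ with at least one arc such that $G'$ is not a directed cycle. Then $d(L^kG)\to\infty$ as $k\to\infty$.
   Context: Digraphs are finite and may have loops and multiple arcs. The line digraph $LG$ has as vertex set the set of arcs of $G$, with an arc from $e$ to $f$ whenever the head of $e$ equals the tail of $f$; $L^0G=G$, $L^kG=L(L^{k-1}G)$. The inner diameter is $d(G)=\max\{\mathrm{dist}_G(u,v): \mathrm{dist}_G(u,v)<\infty\}$, where $\mathrm{dist}_G(u,v)$ is the length of a shortest directed walk from $u$ to $v$. A directed cycle is a digraph with vertices $v_0,\dots,v_{n-1}$ ($n\ge1$) and exactly the arcs $(v_i,v_{i+1\bmod n})$. *)

theory Defs
  imports Main "HOL-Library.Nat_Bijection"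
begin

text \<open>Vertices and arcs are
  (codes in) natural numbers; every finite digraph is isomorphic to one of
  this form, and all notions below are isomorphism invariant.\<close>

record dg =
  dverts :: "nat set"
  darcs :: "nat set"
  dtail :: "nat \<Rightarrow> nat"
  dhead :: "nat \<Rightarrow> nat"

definition wf_dg :: "dg \<Rightarrow> bool" where
  "wf_dg G \<longleftrightarrow> finite (dverts G) \<and> finite (darcs G) \<and>
     (\<forall>e\<in>darcs G. dtail G e \<in> dverts G \<and> dhead G e \<in> dverts G)"

text \<open>Line digraph: vertices are the arcs of G; there is one arc (coded as
  the pair (e,f)) from e to f whenever head e = tail f.\<close>
definition line_dg :: "dg \<Rightarrow> dg" where
  "line_dg G = \<lparr> dverts = darcs G,
     darcs = {prod_encode (e, f) | e f. e \<in> darcs G \<and> f \<in> darcs G \<and> dhead G e = dtail G f},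
     dtail = (\<lambda>a. fst (prod_decode a)),
     dhead = (\<lambda>a. snd (prod_decode a)) \<rparr>"

definition iter_line_dg :: "nat \<Rightarrow> dg \<Rightarrow> dg" where
  "iter_line_dg k G = (line_dg ^^ k) G"

fun is_walk :: "dg \<Rightarrow> nat \<Rightarrow> nat list \<Rightarrow> nat \<Rightarrow> bool" where
  "is_walk G u [] v \<longleftrightarrow> u = v \<and> u \<in> dverts G"
| "is_walk G u (e # es) v \<longleftrightarrow> e \<in> darcs G \<and> dtail G e = u \<and> u \<in> dverts G \<and>
     is_walk G (dhead G e) es v"

definition reachable :: "dg \<Rightarrow> nat \<Rightarrow> nat \<Rightarrow> bool" where
  "reachable G u v \<longleftrightarrow> (\<exists>es. is_walk G u es v)"

text \<open>dist_G(u,v): length of a shortest directed walk (meaningful when finite).\<close>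
definition dist :: "dg \<Rightarrow> nat \<Rightarrow> nat \<Rightarrow> nat" where
  "dist G u v = (LEAST n. \<exists>es. is_walk G u es v \<and> length es = n)"

definition inner_diam :: "dg \<Rightarrow> nat" where
  "inner_diam G = Max {dist G u v | u v. u \<in> dverts G \<and> v \<in> dverts G \<and> reachable G u v}"

definition strongly_connected :: "dg \<Rightarrow> bool" where
  "strongly_connected G \<longleftrightarrow> (\<forall>u\<in>dverts G. \<forall>v\<in>dverts G. reachable G u v)"

definition subdigraph :: "dg \<Rightarrow> dg \<Rightarrow> bool" where
  "subdigraph H G \<longleftrightarrow> wf_dg H \<and> dverts H \<subseteq> dverts G \<and> darcs H \<subseteq> darcs G \<and>
     (\<forall>e\<in>darcs H. dtail H e = dtail G e \<and> dhead H e = dhead G e)"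

definition is_directed_cycle :: "dg \<Rightarrow> bool" where
  "is_directed_cycle G \<longleftrightarrow> (\<exists>(n::nat) vs ars. n \<ge> 1 \<and>
     bij_betw vs {0..<n} (dverts G) \<and> bij_betw ars {0..<n} (darcs G) \<and>
     (\<forall>i<n. dtail G (ars i) = vs i \<and> dhead G (ars i) = vs ((i + 1) mod n)))"

end

theory Submission
  imports Defs "HOL-Combinatorics.Orbits"
begin

text \<open>Since the strongly connected subdigraph H is not a directed cycle, some vertex of H
  has two out-arcs. Strong connectivity and this branching pass from H to L H, and a strongly
  connected branching digraph has more arcs than vertices, so L^k H has at least k vertices.
  On the other hand the out-degree of an arc e in L G is the out-degree of its head in G,
  so all out-degrees of L^k G are bounded by \<Delta> = |A(G)|. Fewer than 1 + \<Delta> + ... + \<Delta>^(D-1)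
  vertices lie within distance D - 1 of a vertex w of the subdigraph L^k H of L^k G, while all
  of L^k H is reachable from w; hence d(L^k G) \<ge> D for large k.\<close>

lemma is_walk_verts: "is_walk G u es v \<Longrightarrow> u \<in> dverts G \<and> v \<in> dverts G"
  by (induction es arbitrary: u) auto

lemma is_walk_subdigraph: "subdigraph K G \<Longrightarrow> is_walk K u es v \<Longrightarrow> is_walk G u es v"
  by (induction es arbitrary: u) (auto simp: subdigraph_def)

lemma line_dg_simps [simp]:
  "dverts (line_dg G) = darcs G"
  "dtail (line_dg G) = (\<lambda>a. fst (prod_decode a))"
  "dhead (line_dg G) = (\<lambda>a. snd (prod_decode a))"
  by (simp_all add: line_dg_def)

lemma in_darcs_line_dg:
  "p \<in> darcs (line_dg G) \<longleftrightarrow>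
     (\<exists>e f. p = prod_encode (e, f) \<and> e \<in> darcs G \<and> f \<in> darcs G \<and> dhead G e = dtail G f)"
  by (simp add: line_dg_def)

lemma prod_encode_in_darcs_line_dg [simp]:
  "prod_encode (e, f) \<in> darcs (line_dg G) \<longleftrightarrow>
     e \<in> darcs G \<and> f \<in> darcs G \<and> dhead G e = dtail G f"
  by (auto simp: in_darcs_line_dg)

lemma wf_dg_line_dg:
  assumes "wf_dg G"
  shows "wf_dg (line_dg G)"
proof -
  have "darcs (line_dg G) \<subseteq> prod_encode ` (darcs G \<times> darcs G)"
    by (auto simp: in_darcs_line_dg)
  moreover have "finite (prod_encode ` (darcs G \<times> darcs G))"
    using assms by (simp add: wf_dg_def)
  ultimately have "finite (darcs (line_dg G))"
    by (rule finite_subset)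
  then show ?thesis
    using assms by (auto simp: wf_dg_def in_darcs_line_dg)
qed

lemma subdigraph_line_dg: "subdigraph K G \<Longrightarrow> subdigraph (line_dg K) (line_dg G)"
  unfolding subdigraph_def by (auto simp: wf_dg_line_dg in_darcs_line_dg; blast)

lemma is_walk_line_dg:
  "\<lbrakk>is_walk G (dhead G e) es (dtail G f); e \<in> darcs G; f \<in> darcs G\<rbrakk>
     \<Longrightarrow> \<exists>ps. is_walk (line_dg G) e ps f"
proof (induction es arbitrary: e)
  case Nil
  then show ?case by (intro exI[of _ "[prod_encode (e, f)]"]) auto
next
  case (Cons g gs)
  then obtain ps where "is_walk (line_dg G) g ps f" by auto
  with Cons.prems show ?case by (intro exI[of _ "prod_encode (e, g) # ps"]) auto
qed

lemma strongly_connected_line_dg: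
  assumes "wf_dg G" and "strongly_connected G"
  shows "strongly_connected (line_dg G)"
  unfolding strongly_connected_def reachable_def
proof (intro ballI)
  fix e f assume "e \<in> dverts (line_dg G)" "f \<in> dverts (line_dg G)"
  then have arcs: "e \<in> darcs G" "f \<in> darcs G" by simp_all
  then have "dhead G e \<in> dverts G" "dtail G f \<in> dverts G"
    using \<open>wf_dg G\<close> by (auto simp: wf_dg_def)
  then obtain es where "is_walk G (dhead G e) es (dtail G f)"
    using \<open>strongly_connected G\<close> by (auto simp: strongly_connected_def reachable_def)
  then show "\<exists>ps. is_walk (line_dg G) e ps f"
    using arcs by (rule is_walk_line_dg)
qed

lemma iter_line_dg_0 [simp]: "iter_line_dg 0 G = G"
  and iter_line_dg_Suc [simp]: "iter_line_dg (Suc k) G = line_dg (iter_line_dg k G)"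
  by (simp_all add: iter_line_dg_def)

lemma wf_dg_iter_line_dg: "wf_dg G \<Longrightarrow> wf_dg (iter_line_dg k G)"
  by (induction k) (simp_all add: wf_dg_line_dg)

lemma subdigraph_iter_line_dg:
  "subdigraph K G \<Longrightarrow> subdigraph (iter_line_dg k K) (iter_line_dg k G)"
  by (induction k) (simp_all add: subdigraph_line_dg)

lemma strongly_connected_iter_line_dg:
  "wf_dg G \<Longrightarrow> strongly_connected G \<Longrightarrow> strongly_connected (iter_line_dg k G)"
  by (induction k) (simp_all add: strongly_connected_line_dg wf_dg_iter_line_dg)

definition branching :: "dg \<Rightarrow> bool" where
  "branching G \<longleftrightarrow>
     (\<exists>a b. a \<in> darcs G \<and> b \<in> darcs G \<and> a \<noteq> b \<and> dtail G a = dtail G b)"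

lemma ex_in_arc:
  assumes "is_walk G u es v" and "a \<in> darcs G" and "dhead G a = u"
  shows "\<exists>b\<in>darcs G. dhead G b = v"
  using assms by (induction es arbitrary: u a) auto

lemma ex_out_arc:
  assumes "strongly_connected G" and "a \<in> darcs G" and "dtail G a \<in> dverts G"
    and "v \<in> dverts G"
  shows "\<exists>e\<in>darcs G. dtail G e = v"
proof -
  obtain es where "is_walk G v es (dtail G a)"
    using assms unfolding strongly_connected_def reachable_def by blast
  with \<open>a \<in> darcs G\<close> show ?thesis by (cases es) auto
qed

lemma branching_line_dg:
  assumes "wf_dg G" and "strongly_connected G" and "branching G"
  shows "branching (line_dg G)"
proof -
  obtain a1 a2 where a: "a1 \<in> darcs G" "a2 \<in> darcs G" "a1 \<noteq> a2" "dtail G a1 = dtail G a2"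
    using \<open>branching G\<close> unfolding branching_def by blast
  then have "dhead G a1 \<in> dverts G" "dtail G a1 \<in> dverts G"
    using \<open>wf_dg G\<close> by (auto simp: wf_dg_def)
  then obtain es where "is_walk G (dhead G a1) es (dtail G a1)"
    using \<open>strongly_connected G\<close> unfolding strongly_connected_def reachable_def by blast
  then obtain b where "b \<in> darcs G" "dhead G b = dtail G a1"
    using ex_in_arc a(1) by blast
  with a show ?thesis
    unfolding branching_def
    by (intro exI[of _ "prod_encode (b, a1)"] exI[of _ "prod_encode (b, a2)"]) simp
qed

lemma branching_iter_line_dg:
  "wf_dg G \<Longrightarrow> strongly_connected G \<Longrightarrow> branching G \<Longrightarrow> branching (iter_line_dg k G)"
  by (induction k)
    (simp_all add: branching_line_dg wf_dg_iter_line_dg strongly_connected_iter_line_dg)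

text \<open>The tail map from arcs to vertices is onto but not injective.\<close>
lemma card_dverts_less_card_darcs:
  assumes "wf_dg G" and "strongly_connected G" and "branching G"
  shows "card (dverts G) < card (darcs G)"
proof -
  obtain a b where ab: "a \<in> darcs G" "b \<in> darcs G" "a \<noteq> b" "dtail G a = dtail G b"
    using \<open>branching G\<close> unfolding branching_def by blast
  have fin: "finite (darcs G)" using \<open>wf_dg G\<close> by (simp add: wf_dg_def)
  have "dtail G a \<in> dverts G" using assms(1) ab(1) by (simp add: wf_dg_def)
  then have "dverts G \<subseteq> dtail G ` darcs G"
    using ex_out_arc[OF assms(2) ab(1)] by blast
  moreover have "dtail G ` darcs G \<subseteq> dverts G"
    using assms(1) by (auto simp: wf_dg_def)
  ultimately have "dtail G ` darcs G = dverts G" by (rule subset_antisym[rotated])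
  moreover have "\<not> inj_on (dtail G) (darcs G)"
    using ab by (auto simp: inj_on_def)
  then have "card (dtail G ` darcs G) \<noteq> card (darcs G)"
    using fin by (simp add: inj_on_iff_eq_card)
  ultimately show ?thesis
    using card_image_le[OF fin, of "dtail G"] by simp
qed

lemma card_dverts_iter_line_dg:
  assumes "wf_dg G" and "strongly_connected G" and "branching G"
  shows "card (dverts G) + k \<le> card (dverts (iter_line_dg k G))"
proof (induction k)
  case (Suc k)
  have "card (dverts (iter_line_dg k G)) < card (darcs (iter_line_dg k G))"
    using assms by (intro card_dverts_less_card_darcs)
      (simp_all add: wf_dg_iter_line_dg strongly_connected_iter_line_dg branching_iter_line_dg)
  with Suc show ?case by simp
qed simp

text \<open>Without branching every vertex has exactly one out-arc, so walks follow the orbit of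
  the successor map s; strong connectivity makes the vertex set a single orbit of s.\<close>
lemma is_directed_cycle_if_not_branching:
  assumes wf: "wf_dg G" and sc: "strongly_connected G" and "darcs G \<noteq> {}"
    and "\<not> branching G"
  shows "is_directed_cycle G"
proof -
  obtain a0 where a0: "a0 \<in> darcs G" using \<open>darcs G \<noteq> {}\<close> by blast
  define v0 where "v0 = dtail G a0"
  have v0: "v0 \<in> dverts G" using wf a0 by (auto simp: wf_dg_def v0_def)
  have unique_out: "\<exists>!e. e \<in> darcs G \<and> dtail G e = v" if "v \<in> dverts G" for v
    using ex_out_arc[OF sc a0 _ that] v0 \<open>\<not> branching G\<close>
    by (auto simp: v0_def branching_def)
  define out where "out v = (THE e. e \<in> darcs G \<and> dtail G e = v)" for v
  have out: "out v \<in> darcs G" "dtail G (out v) = v" if "v \<in> dverts G" for v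
    using theI'[OF unique_out[OF that]] by (simp_all add: out_def)
  have out_tail: "out (dtail G e) = e" if "e \<in> darcs G" for e
  proof -
    have "dtail G e \<in> dverts G" using that wf by (simp add: wf_dg_def)
    from the1_equality[OF unique_out[OF this]] show ?thesis
      using that by (simp add: out_def)
  qed
  define s where "s v = dhead G (out v)" for v
  have s_in: "s v \<in> dverts G" if "v \<in> dverts G" for v
    using out[OF that] wf by (auto simp: wf_dg_def s_def)
  have walk_follows_s: "v = (s ^^ length es) u" if "is_walk G u es v" for u es v
    using that by (induction es arbitrary: u) (auto simp: s_def out_tail funpow_swap1)
  have orbit_eq: "orbit s v0 = dverts G"
  proof
    show "orbit s v0 \<subseteq> dverts G"
      by (rule subsetI, erule orbit.induct) (simp_all add: s_in v0)
    show "dverts G \<subseteq> orbit s v0"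
    proof
      fix v assume "v \<in> dverts G"
      then obtain es where "is_walk G (s v0) es v"
        using sc s_in[OF v0] unfolding strongly_connected_def reachable_def by blast
      then have "v = (s ^^ length es) (s v0)" by (rule walk_follows_s)
      then show "v \<in> orbit s v0" using funpow_in_orbit[OF orbit.base] by simp
    qed
  qed
  then have v0_orbit: "v0 \<in> orbit s v0" using v0 by simp
  define n where "n = funpow_dist1 s v0 v0"
  define vs where "vs i = (s ^^ i) v0" for i
  have vs_in: "vs i \<in> dverts G" for i
    by (induction i) (simp_all add: vs_def v0 s_in)
  have bij_vs: "bij_betw vs {0..<n} (dverts G)"
    unfolding bij_betw_def vs_def n_def
    using inj_on_funpow_dist1[OF v0_orbit] orbit_conv_funpow_dist1[OF v0_orbit] orbit_eq
    by simp
  have "bij_betw out (dverts G) (darcs G)"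
    by (rule bij_betw_byWitness[where f' = "dtail G"])
      (use out out_tail wf in \<open>auto simp: wf_dg_def\<close>)
  then have bij_arcs: "bij_betw (out \<circ> vs) {0..<n} (darcs G)"
    by (rule bij_betw_trans[OF bij_vs])
  have vs_mod: "vs (Suc i mod n) = s (vs i)" for i
    using funpow_mod_eq[where f = s and n = n and x = v0 and m = "Suc i"]
      funpow_dist1_prop[OF v0_orbit]
    by (simp add: vs_def n_def)
  have "\<forall>i<n. dtail G ((out \<circ> vs) i) = vs i \<and> dhead G ((out \<circ> vs) i) = vs ((i + 1) mod n)"
    using out vs_in by (simp add: vs_mod s_def)
  moreover have "n \<ge> 1" by (simp add: n_def)
  ultimately show ?thesis
    unfolding is_directed_cycle_def using bij_vs bij_arcs by blast
qed

definition outdeg :: "dg \<Rightarrow> nat \<Rightarrow> nat" where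
  "outdeg G v = card {e \<in> darcs G. dtail G e = v}"

lemma outdeg_le_card_darcs: "finite (darcs G) \<Longrightarrow> outdeg G v \<le> card (darcs G)"
  unfolding outdeg_def by (rule card_mono) auto

lemma outdeg_line_dg_le:
  assumes "finite (darcs G)"
  shows "outdeg (line_dg G) e \<le> outdeg G (dhead G e)"
proof -
  let ?out = "{f \<in> darcs G. dtail G f = dhead G e}"
  have "{p \<in> darcs (line_dg G). dtail (line_dg G) p = e} \<subseteq> (\<lambda>f. prod_encode (e, f)) ` ?out"
    by (auto simp: in_darcs_line_dg)
  then have "outdeg (line_dg G) e \<le> card ((\<lambda>f. prod_encode (e, f)) ` ?out)"
    unfolding outdeg_def using assms by (intro card_mono) auto
  also have "\<dots> \<le> card ?out" by (rule card_image_le) (use assms in simp)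
  finally show ?thesis by (simp add: outdeg_def)
qed

lemma outdeg_iter_line_dg_le:
  assumes "wf_dg G" and "\<And>v. outdeg G v \<le> \<Delta>"
  shows "outdeg (iter_line_dg k G) v \<le> \<Delta>"
proof (induction k arbitrary: v)
  case (Suc k)
  have "finite (darcs (iter_line_dg k G))"
    using wf_dg_iter_line_dg[OF assms(1)] by (simp add: wf_dg_def)
  then have "outdeg (line_dg (iter_line_dg k G)) v \<le> outdeg (iter_line_dg k G) (dhead (iter_line_dg k G) v)"
    by (rule outdeg_line_dg_le)
  then show ?case unfolding iter_line_dg_Suc using Suc.IH by (rule le_trans)
qed (simp add: assms(2))

definition walk_targets :: "dg \<Rightarrow> nat \<Rightarrow> nat \<Rightarrow> nat set" where
  "walk_targets G w i = {v. \<exists>es. is_walk G w es v \<and> length es = i}"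

lemma finite_walk_targets: "wf_dg G \<Longrightarrow> finite (walk_targets G w i)"
  by (rule finite_subset[of _ "dverts G"])
    (auto simp: walk_targets_def wf_dg_def dest: is_walk_verts)

lemma walk_targets_Suc:
  assumes "wf_dg G"
  shows "walk_targets G w (Suc i) = (\<Union>e\<in>{e \<in> darcs G. dtail G e = w}. walk_targets G (dhead G e) i)"
proof (intro set_eqI iffI)
  fix v assume "v \<in> walk_targets G w (Suc i)"
  then obtain e es where "is_walk G w (e # es) v" "length es = i"
    by (auto simp: walk_targets_def length_Suc_conv)
  then show "v \<in> (\<Union>e\<in>{e \<in> darcs G. dtail G e = w}. walk_targets G (dhead G e) i)"
    by (auto simp: walk_targets_def)
next
  fix v assume "v \<in> (\<Union>e\<in>{e \<in> darcs G. dtail G e = w}. walk_targets G (dhead G e) i)"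
  then obtain e es where "e \<in> darcs G" "dtail G e = w" "is_walk G (dhead G e) es v" "length es = i"
    by (auto simp: walk_targets_def)
  moreover from this have "w \<in> dverts G"
    using assms by (auto simp: wf_dg_def)
  ultimately show "v \<in> walk_targets G w (Suc i)"
    unfolding walk_targets_def by (intro CollectI exI[of _ "e # es"]) auto
qed

lemma card_walk_targets_le:
  assumes "wf_dg G" and "\<And>v. outdeg G v \<le> \<Delta>"
  shows "card (walk_targets G w i) \<le> \<Delta> ^ i"
proof (induction i arbitrary: w)
  case 0
  have "walk_targets G w 0 \<subseteq> {w}" by (auto simp: walk_targets_def)
  then show ?case using card_mono[of "{w}"] by simp
next
  case (Suc i)
  let ?out = "{e \<in> darcs G. dtail G e = w}"
  have fin: "finite ?out" using assms(1) by (simp add: wf_dg_def)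
  have "card (walk_targets G w (Suc i)) \<le> (\<Sum>e\<in>?out. card (walk_targets G (dhead G e) i))"
    unfolding walk_targets_Suc[OF assms(1)] by (rule card_UN_le[OF fin])
  also have "\<dots> \<le> card ?out * \<Delta> ^ i"
    using Suc.IH sum_mono[of ?out _ "\<lambda>_. \<Delta> ^ i"] by simp
  also have "\<dots> \<le> \<Delta> ^ Suc i"
    using assms(2)[of w] by (simp add: outdeg_def)
  finally show ?case .
qed

lemma is_walk_dist:
  "reachable G u v \<Longrightarrow> \<exists>es. is_walk G u es v \<and> length es = dist G u v"
  unfolding reachable_def dist_def by (rule LeastI_ex) blast

lemma dist_le_inner_diam:
  assumes "wf_dg G" and "reachable G u v"
  shows "dist G u v \<le> inner_diam G"
proof -
  have "{dist G u v | u v. u \<in> dverts G \<and> v \<in> dverts G \<and> reachable G u v}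
          \<subseteq> (\<lambda>(u, v). dist G u v) ` (dverts G \<times> dverts G)"
    by auto
  moreover have "finite ((\<lambda>(u, v). dist G u v) ` (dverts G \<times> dverts G))"
    using \<open>wf_dg G\<close> by (simp add: wf_dg_def)
  ultimately have "finite {dist G u v | u v. u \<in> dverts G \<and> v \<in> dverts G \<and> reachable G u v}"
    by (rule finite_subset)
  moreover have "u \<in> dverts G" "v \<in> dverts G"
    using \<open>reachable G u v\<close> is_walk_verts by (auto simp: reachable_def)
  ultimately show ?thesis
    unfolding inner_diam_def using \<open>reachable G u v\<close> by (intro Max_ge) blast+
qed

lemma inner_diam_ge_if_many_reachable:
  assumes wf: "wf_dg G" and deg: "\<And>v. outdeg G v \<le> \<Delta>"
    and many: "(\<Sum>i<D. \<Delta> ^ i) < card {v. reachable G w v}"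
  shows "D \<le> inner_diam G"
proof (rule ccontr)
  assume "\<not> D \<le> inner_diam G"
  have "{v. reachable G w v} \<subseteq> (\<Union>i<D. walk_targets G w i)"
  proof
    fix v assume "v \<in> {v. reachable G w v}"
    then have "reachable G w v" by simp
    then have "v \<in> walk_targets G w (dist G w v)" and "dist G w v < D"
      using is_walk_dist[of G w v] dist_le_inner_diam[OF wf \<open>reachable G w v\<close>]
        \<open>\<not> D \<le> inner_diam G\<close>
      by (auto simp: walk_targets_def)
    then show "v \<in> (\<Union>i<D. walk_targets G w i)" by blast
  qed
  then have "card {v. reachable G w v} \<le> card (\<Union>i<D. walk_targets G w i)"
    by (rule card_mono[rotated]) (simp add: finite_walk_targets wf)
  also have "\<dots> \<le> (\<Sum>i<D. card (walk_targets G w i))"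
    by (rule card_UN_le) simp
  also have "\<dots> \<le> (\<Sum>i<D. \<Delta> ^ i)"
    by (rule sum_mono) (rule card_walk_targets_le[OF wf deg])
  finally show False using many by simp
qed

lemma inner_diam_ge_if_large_strongly_connected_subdigraph:
  assumes wf: "wf_dg G" and deg: "\<And>v. outdeg G v \<le> \<Delta>"
    and sub: "subdigraph K G" and sc: "strongly_connected K"
    and large: "(\<Sum>i<D. \<Delta> ^ i) < card (dverts K)"
  shows "D \<le> inner_diam G"
proof -
  obtain w where w: "w \<in> dverts K"
    using large by (metis card.empty ex_in_conv not_less0)
  have "dverts K \<subseteq> {v. reachable G w v}"
    using sc w is_walk_subdigraph[OF sub]
    unfolding strongly_connected_def reachable_def by blast
  moreover have "{v. reachable G w v} \<subseteq> dverts G"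
    using is_walk_verts by (auto simp: reachable_def)
  ultimately have "card (dverts K) \<le> card {v. reachable G w v}"
    using wf by (intro card_mono) (auto simp: wf_dg_def intro: finite_subset)
  with large have "(\<Sum>i<D. \<Delta> ^ i) < card {v. reachable G w v}" by linarith
  then show ?thesis by (rule inner_diam_ge_if_many_reachable[OF wf deg])
qed

theorem proposition3p1:
  fixes G H :: dg
  assumes "wf_dg G"
    and "\<not> strongly_connected G"
    and "subdigraph H G"
    and "strongly_connected H"
    and "darcs H \<noteq> {}"
    and "\<not> is_directed_cycle H"
  shows "filterlim (\<lambda>k. inner_diam (iter_line_dg k G)) at_top sequentially"
proof -
  have wfH: "wf_dg H" using assms(3) by (simp add: subdigraph_def)
  have H_branching: "branching H"
    using is_directed_cycle_if_not_branching[OF wfH assms(4,5)] assms(6) by blast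
  define \<Delta> where "\<Delta> = card (darcs G)"
  have deg: "outdeg G v \<le> \<Delta>" for v
    using assms(1) by (simp add: \<Delta>_def wf_dg_def outdeg_le_card_darcs)
  have "D \<le> inner_diam (iter_line_dg k G)" if "(\<Sum>i<D. \<Delta> ^ i) < k" for D k
  proof (rule inner_diam_ge_if_large_strongly_connected_subdigraph)
    show "wf_dg (iter_line_dg k G)" using assms(1) by (rule wf_dg_iter_line_dg)
    show "outdeg (iter_line_dg k G) v \<le> \<Delta>" for v
      using assms(1) deg by (rule outdeg_iter_line_dg_le)
    show "subdigraph (iter_line_dg k H) (iter_line_dg k G)"
      using assms(3) by (rule subdigraph_iter_line_dg)
    show "strongly_connected (iter_line_dg k H)"
      using wfH assms(4) by (rule strongly_connected_iter_line_dg)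
    show "(\<Sum>i<D. \<Delta> ^ i) < card (dverts (iter_line_dg k H))"
      using that card_dverts_iter_line_dg[OF wfH assms(4) H_branching, of k] by linarith
  qed
  then have "\<forall>k\<ge>Suc (\<Sum>i<D. \<Delta> ^ i). D \<le> inner_diam (iter_line_dg k G)" for D
    by (simp add: Suc_le_lessD)
  then show ?thesis
    unfolding filterlim_at_top eventually_sequentially by blast
qed

end
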